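(* Let $0<p\leq 1$, let $A\in\mathbb{R}^{m\times N}$ with $N=nd$, and let $x\in\mathbb{R}^N$. Let $y=Ax+e$ with $\lVert e\rVert_2\leq\varepsilon$. Let $x^k$ be a best block $k$-sparse approximation of $x$ (i.e. $x^k$ minimizes $\lVert x-g\rVert_{2,1}$ over all block $k$-sparse $g\in\mathbb{R}^N$), and let $T_0\subset\{1,\dots,n\}$ be the block support of $x^k$. Let $\tilde T\subset\{1,\dots,n\}$ be an arbitrary set, and define $\rho,\alpha\geq 0$ by $|\tilde T|=\rho k$ and $|\tilde T\cap T_0|=\alpha\rho k$. Let $0\leq\omega\leq 1$ and set $\gamma=\omega+(1-\omega)(1+\rho-2\alpha\rho)^{1-p/2}$. Suppose there exists an integer $a$ with $a\geq(1-\alpha)\rho$ and $a>1$ such that $$\delta_{ak}+\frac{a^{1-p/2}}{\gamma}\delta_{(a+1)k}<\frac{a^{1-p/2}}{\gamma}-1 .$$ Then any solution $x^\sharp$ of $$\min_{z\in\mathbb{R}^N}\sum_{i=1}^n w_i\lVert z[i]\rVert_2^p\quad\text{subject to}\quad \lVert y-Az\rVert_2\leq\varepsilon,\qquad w_i=\begin{cases}\omega,& i\in\tilde T\\ 1,& i\in\tilde T^c\end{cases}$$ satisfies $$\lVert x^\sharp-x\rVert_2\leq C_1\frac{\Big(\omega\lVert x-x^k\rVert_{2,p}^p+(1-\omega)\lVert x_{\tilde T^c\cap T_0^c}\rVert_{2,p}^p\Big)^{1/p}}{k^{1/p-1/2}}+C_2\varepsilon$$ for some positive constants $C_1,C_2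$.
   Context: Vectors $x\in\mathbb{R}^N$, $N=nd$, are split into $n$ consecutive blocks of length $d$: $x[i]=(x_{(i-1)d+1},\dots,x_{id})^T$, $i=1,\dots,n$. For $p>0$, $\lVert x\rVert_{2,p}=(\sum_{i=1}^n\lVert x[i]\rVert_2^p)^{1/p}$. A vector is block $k$-sparse if at most $k$ blocks $x[i]$ are nonzero; its block support is the set of indices $i$ with $x[i]\neq 0$. For a block index set $T$, $x_T$ denotes the vector equal to $x$ on the blocks indexed by $T$ and zero elsewhere; $T^c$ is the complement in $\{1,\dots,n\}$. For a vector $v\in\mathbb{R}^m$, $\lVert v\rVert_p^p=\sum_{i=1}^m|v_i|^p$. The block $p$-restricted isometry constant $\delta_k$ of $A$ (of order $k$) is the smallest positive number such that $(1-\delta_k)\lVert z\rVert_2^p\leq\lVert Az\rVert_p^p\leq(1+\delta_k)\lVert z\rVert_2^p$ for all block $k$-sparse $z\in\mathbb{R}^N$. *)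

theory Defs
  imports Complex_Main
begin

text \<open>Vectors in R^N (N = n*d) are functions nat => real, only indices < N matter.
  Blocks are 0-indexed: block i (i < n) consists of entries i*d + j, j < d.
  Matrices A in R^(m x N) are functions nat => nat => real (rows < m, columns < N).\<close>

definition block_norm :: "nat \<Rightarrow> (nat \<Rightarrow> real) \<Rightarrow> nat \<Rightarrow> real" where
  "block_norm d z i = sqrt (\<Sum>j<d. (z (i*d + j))^2)"

definition mixed_norm :: "nat \<Rightarrow> nat \<Rightarrow> real \<Rightarrow> (nat \<Rightarrow> real) \<Rightarrow> real" where
  "mixed_norm n d p z = (\<Sum>i<n. block_norm d z i powr p) powr (1/p)"

definition block_support :: "nat \<Rightarrow> nat \<Rightarrow> (nat \<Rightarrow> real) \<Rightarrow> nat set" where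
  "block_support n d z = {i. i < n \<and> block_norm d z i \<noteq> 0}"

definition block_sparse :: "nat \<Rightarrow> nat \<Rightarrow> nat \<Rightarrow> (nat \<Rightarrow> real) \<Rightarrow> bool" where
  "block_sparse n d k z \<longleftrightarrow> card (block_support n d z) \<le> k"

definition restrict_blocks :: "nat \<Rightarrow> nat set \<Rightarrow> (nat \<Rightarrow> real) \<Rightarrow> (nat \<Rightarrow> real)" where
  "restrict_blocks d T z = (\<lambda>j. if j div d \<in> T then z j else 0)"

definition mat_vec :: "nat \<Rightarrow> (nat \<Rightarrow> nat \<Rightarrow> real) \<Rightarrow> (nat \<Rightarrow> real) \<Rightarrow> (nat \<Rightarrow> real)" where
  "mat_vec N A z = (\<lambda>i. \<Sum>j<N. A i j * z j)"

definition norm2 :: "nat \<Rightarrow> (nat \<Rightarrow> real) \<Rightarrow> real" where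
  "norm2 m v = sqrt (\<Sum>i<m. (v i)^2)"

definition lp_pow :: "nat \<Rightarrow> real \<Rightarrow> (nat \<Rightarrow> real) \<Rightarrow> real" where
  "lp_pow m p v = (\<Sum>i<m. \<bar>v i\<bar> powr p)"

definition block_p_RIC :: "nat \<Rightarrow> nat \<Rightarrow> nat \<Rightarrow> real \<Rightarrow> (nat \<Rightarrow> nat \<Rightarrow> real) \<Rightarrow> nat \<Rightarrow> real" where
  "block_p_RIC m n d p A k = Inf {\<delta>. \<delta> > 0 \<and> (\<forall>z. block_sparse n d k z \<longrightarrow>
      (1 - \<delta>) * norm2 (n*d) z powr p \<le> lp_pow m p (mat_vec (n*d) A z) \<and>
      lp_pow m p (mat_vec (n*d) A z) \<le> (1 + \<delta>) * norm2 (n*d) z powr p)}"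

definition weighted_obj :: "nat \<Rightarrow> nat \<Rightarrow> real \<Rightarrow> real \<Rightarrow> nat set \<Rightarrow> (nat \<Rightarrow> real) \<Rightarrow> real" where
  "weighted_obj n d p \<omega> Tt z = (\<Sum>i<n. (if i \<in> Tt then \<omega> else 1) * block_norm d z i powr p)"

end

theory Submission
  imports Defs "HOL-Analysis.Analysis"
begin

text \<open>
  Put \<open>h = xs - x\<close>. As \<open>x\<close> is feasible, the minimality of \<open>xs\<close> for the weighted objective
  yields a cone constraint: the \<open>p\<close>-th powers of the block norms of \<open>h\<close> off \<open>T0\<close> are bounded
  by their weighted sums over \<open>T0\<close> and over the symmetric difference of \<open>T0\<close> and \<open>Tt\<close>, plus
  twice the approximation term. Order the blocks of \<open>h\<close> outside \<open>T0\<close> by decreasing norm and cut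
  them into groups of \<open>a k\<close> blocks. Every block of a group is dominated by the \<open>p\<close>-mean of the
  previous group, so by the power mean inequality all later groups are controlled by the head,
  \<open>T0\<close> together with the first group; the symmetric difference also lies in the head up to an
  exchange, which produces the factor \<open>\<gamma>\<close>. The block \<open>p\<close>-RIP, a lower bound on the head and upper
  bounds on the later groups, together with the \<open>p\<close>-triangle inequality and the bound \<open>2 \<epsilon>\<close> on
  the residual \<open>A h\<close>, then bounds the head; the RIP hypothesis is exactly what makes the resulting
  coefficient positive.
\<close>

section \<open>Elementary inequalities for real powers\<close>

lemma powr_add_le_add_powr:
  fixes a b p :: real
  assumes "0 < p" "p \<le> 1" "0 \<le> a" "0 \<le> b"
  shows "(a + b) powr p \<le> a powr p + b powr p"
proof (cases "a = 0 \<or> b = 0")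
  case True
  then show ?thesis using assms by auto
next
  case False
  with assms have a: "0 < a" and b: "0 < b" by auto
  have split: "x powr p = x * x powr (p - 1)" if "0 < x" for x :: real
    using that by (simp add: powr_mult_base)
  have "(a + b) powr p = a * (a + b) powr (p - 1) + b * (a + b) powr (p - 1)"
    using a b by (simp add: split distrib_right)
  also have "\<dots> \<le> a * a powr (p - 1) + b * b powr (p - 1)"
    using a b assms by (intro add_mono mult_left_mono powr_mono2') auto
  also have "\<dots> = a powr p + b powr p"
    using a b by (simp add: split)
  finally show ?thesis .
qed

lemma powr_le_add_powr:
  fixes x y z p :: real
  assumes "0 < p" "p \<le> 1" "0 \<le> x" "0 \<le> y" "0 \<le> z" "x \<le> y + z"
  shows "x powr p \<le> y powr p + z powr p"
  using powr_mono2[of p x "y + z"] powr_add_le_add_powr[of p y z] assms by linarith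

lemma powr_sum_le_sum_powr:
  fixes f :: "'a \<Rightarrow> real"
  assumes "0 < p" "p \<le> 1" "\<And>i. i \<in> S \<Longrightarrow> 0 \<le> f i"
  shows "(\<Sum>i\<in>S. f i) powr p \<le> (\<Sum>i\<in>S. f i powr p)"
  using assms(3)
proof (induction S rule: infinite_finite_induct)
  case (insert x F)
  have "(\<Sum>i\<in>insert x F. f i) powr p \<le> f x powr p + (\<Sum>i\<in>F. f i) powr p"
    using insert assms by (auto intro: powr_add_le_add_powr sum_nonneg)
  also have "\<dots> \<le> f x powr p + (\<Sum>i\<in>F. f i powr p)"
    using insert by simp
  finally show ?case using insert by simp
qed auto

lemma powr_add_le_two_powr:
  fixes u v r :: real
  assumes "0 \<le> r" "0 \<le> u" "0 \<le> v"
  shows "(u + v) powr r \<le> (2 * u) powr r + (2 * v) powr r"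
proof -
  have "(u + v) powr r \<le> (2 * max u v) powr r"
    using assms by (intro powr_mono2) auto
  also have "\<dots> \<le> (2 * u) powr r + (2 * v) powr r"
    by (simp add: max_def)
  finally show ?thesis .
qed

lemma le_root_bound_of_powr_le:
  fixes u c1 c2 \<epsilon> r p :: real
  assumes "0 < p" "0 \<le> u" "0 \<le> c1" "0 \<le> c2" "0 \<le> \<epsilon>" "0 \<le> r"
    and "u powr p \<le> c1 * \<epsilon> powr p + c2 * r"
  shows "u \<le> (2 * c2 + 1) powr (1 / p) * r powr (1 / p) + (2 * c1 + 1) powr (1 / p) * \<epsilon>"
proof -
  have "u = (u powr p) powr (1 / p)"
    using assms(1,2) by (simp add: powr_powr)
  also have "\<dots> \<le> (c1 * \<epsilon> powr p + c2 * r) powr (1 / p)"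
    using assms by (intro powr_mono2) auto
  also have "\<dots> \<le> (2 * (c1 * \<epsilon> powr p)) powr (1 / p) + (2 * (c2 * r)) powr (1 / p)"
    using assms by (intro powr_add_le_two_powr) auto
  also have "\<dots> = (2 * c1) powr (1 / p) * \<epsilon> + (2 * c2) powr (1 / p) * r powr (1 / p)"
    using assms by (simp add: powr_mult powr_powr mult.assoc[symmetric])
  also have "\<dots> \<le> (2 * c1 + 1) powr (1 / p) * \<epsilon> + (2 * c2 + 1) powr (1 / p) * r powr (1 / p)"
    using assms by (intro add_mono mult_right_mono powr_mono2) auto
  finally show ?thesis by simp
qed

text \<open>Power mean inequality, via Young's inequality against the mean of \<open>t\<close>.\<close>

lemma sum_powr_le_card_powr:
  fixes t :: "'a \<Rightarrow> real"
  assumes "0 < q" "q \<le> 1" "finite U" "\<And>i. i \<in> U \<Longrightarrow> 0 \<le> t i"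
  shows "(\<Sum>i\<in>U. t i powr q) \<le> real (card U) powr (1 - q) * (\<Sum>i\<in>U. t i) powr q"
proof (cases "(\<Sum>i\<in>U. t i) = 0")
  case True
  then have "\<forall>i\<in>U. t i = 0" using sum_nonneg_eq_0_iff assms by blast
  then show ?thesis by simp
next
  case False
  define T where "T = (\<Sum>i\<in>U. t i)"
  define c where "c = real (card U)"
  define M where "M = T / c"
  have T: "0 < T" using False assms by (simp add: T_def less_le sum_nonneg)
  have c: "0 < c" using False assms by (auto simp: c_def card_gt_0_iff)
  have M: "0 < M" using T c by (simp add: M_def)
  have young: "t i powr q * M powr (1 - q) \<le> q * t i + (1 - q) * M" if "i \<in> U" for i
  proof (cases "t i = 0")
    case False
    then have "0 < t i" using assms(4)[OF that] by simp
    then show ?thesis using Youngs_inequality_0[of q "1 - q" "t i" M] assms M by simp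
  qed (use assms M in simp)
  have "(\<Sum>i\<in>U. t i powr q) * M powr (1 - q) \<le> (\<Sum>i\<in>U. q * t i + (1 - q) * M)"
    unfolding sum_distrib_right using young by (rule sum_mono)
  also have "\<dots> = q * T + (1 - q) * (c * M)"
    by (simp add: sum.distrib T_def c_def flip: sum_distrib_left)
  also have "\<dots> = T"
    using c by (simp add: M_def algebra_simps)
  also have "T = c powr (1 - q) * T powr q * M powr (1 - q)"
    using T c by (simp add: M_def powr_divide field_simps flip: powr_add)
  finally show ?thesis using M by (simp add: T_def c_def)
qed

lemma sq_powr_half: "0 \<le> t \<Longrightarrow> (t\<^sup>2) powr (p / 2) = (t::real) powr p"
  by (cases "t = 0") (simp_all add: powr_powr flip: powr_numeral)

lemma sqrt_powr: "0 \<le> x \<Longrightarrow> sqrt x powr p = x powr (p / 2)"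
  by (simp add: powr_half_sqrt[symmetric] powr_powr)

lemma sum_powr_le_card_sum_sq:
  fixes f :: "'a \<Rightarrow> real"
  assumes "0 < p" "p \<le> 2" "finite U" "\<And>i. 0 \<le> f i"
  shows "(\<Sum>i\<in>U. f i powr p) \<le> real (card U) powr (1 - p / 2) * (\<Sum>i\<in>U. (f i)\<^sup>2) powr (p / 2)"
  using sum_powr_le_card_powr[of "p / 2" U "\<lambda>i. (f i)\<^sup>2"] assms
  by (simp add: sq_powr_half)

section \<open>Grouping an index set by decreasing value\<close>

text \<open>Ranking of \<open>S\<close> by decreasing value of \<open>f\<close>, ties broken by index; rank groups are
  the consecutive chunks of \<open>K\<close> elements in this order.\<close>

definition ranks_before :: "(nat \<Rightarrow> real) \<Rightarrow> nat \<Rightarrow> nat \<Rightarrow> bool" where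
  "ranks_before f i j \<longleftrightarrow> f j < f i \<or> (f i = f j \<and> i < j)"

definition value_rank :: "(nat \<Rightarrow> real) \<Rightarrow> nat set \<Rightarrow> nat \<Rightarrow> nat" where
  "value_rank f S i = card {j\<in>S. ranks_before f j i}"

definition rank_group :: "(nat \<Rightarrow> real) \<Rightarrow> nat set \<Rightarrow> nat \<Rightarrow> nat \<Rightarrow> nat set" where
  "rank_group f S K l = {i\<in>S. value_rank f S i div K = l}"

lemma div_eq_iff_interval: "0 < K \<Longrightarrow> i div K = l \<longleftrightarrow> l * K \<le> i \<and> i < l * K + K"
  for i K l :: nat
  by (metis add.commute div_nat_eqI div_times_less_eq_dividend dividend_less_times_div
      mult.commute mult_Suc)

lemma ranks_before_total: "i \<noteq> j \<Longrightarrow> ranks_before f i j \<or> ranks_before f j i"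
  unfolding ranks_before_def by (cases "f i < f j"; cases "i < j") auto

lemma rank_less_rank:
  assumes "finite S" "i \<in> S" "j \<in> S" "ranks_before f j i"
  shows "value_rank f S j < value_rank f S i"
proof -
  have "{l\<in>S. ranks_before f l j} \<subset> {l\<in>S. ranks_before f l i}"
    using assms by (auto simp: ranks_before_def)
  then show ?thesis
    unfolding value_rank_def using assms(1) by (intro psubset_card_mono) auto
qed

lemma rank_less_card:
  assumes "finite S" "i \<in> S"
  shows "value_rank f S i < card S"
proof -
  have "{l\<in>S. ranks_before f l i} \<subset> S"
    using assms by (auto simp: ranks_before_def)
  then show ?thesis
    unfolding value_rank_def using assms(1) by (intro psubset_card_mono) auto
qed

lemma bij_betw_rank:
  assumes "finite S"
  shows "bij_betw (value_rank f S) S {..<card S}"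
proof -
  have inj: "inj_on (value_rank f S) S"
  proof (rule inj_onI, rule ccontr)
    fix i j assume "i \<in> S" "j \<in> S" "value_rank f S i = value_rank f S j" "i \<noteq> j"
    then show False
      using rank_less_rank[OF assms, of i j f] rank_less_rank[OF assms, of j i f]
        ranks_before_total[of i j f] by auto
  qed
  moreover have "value_rank f S ` S = {..<card S}"
    using rank_less_card[OF assms] card_image[OF inj]
    by (intro card_subset_eq) auto
  ultimately show ?thesis by (simp add: bij_betw_def)
qed

lemma rank_less_imp_le:
  assumes "finite S" "i \<in> S" "j \<in> S" "value_rank f S i < value_rank f S j"
  shows "f j \<le> f i"
proof (rule ccontr)
  assume "\<not> f j \<le> f i"
  then have "value_rank f S j < value_rank f S i"
    using assms(1-3) by (intro rank_less_rank) (auto simp: ranks_before_def)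
  then show False using assms(4) by simp
qed

lemma card_rank_group:
  assumes "finite S"
  shows "card (rank_group f S K l) = card {r\<in>{..<card S}. r div K = l}"
proof -
  have "bij_betw (value_rank f S) (rank_group f S K l) {r\<in>{..<card S}. r div K = l}"
    using bij_betw_rank[OF assms, of f]
    unfolding rank_group_def bij_betw_def by (auto intro: inj_on_subset)
  then show ?thesis by (rule bij_betw_same_card)
qed

lemma card_rank_group_le:
  assumes "finite S" "0 < K"
  shows "card (rank_group f S K l) \<le> K"
proof -
  have "{r\<in>{..<card S}. r div K = l} \<subseteq> {l * K..<l * K + K}"
    using div_eq_iff_interval[OF assms(2)] by auto
  then show ?thesis
    unfolding card_rank_group[OF assms(1)] by (metis card_atLeastLessThan card_mono
      diff_add_inverse finite_atLeastLessThan)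
qed

lemma card_rank_group_full:
  assumes "finite S" "0 < K" "rank_group f S K (Suc l) \<noteq> {}"
  shows "card (rank_group f S K l) = K"
proof -
  obtain i where i: "i \<in> S" "value_rank f S i div K = Suc l"
    using assms(3) by (auto simp: rank_group_def)
  then have "l * K + K \<le> card S"
    using rank_less_card[OF assms(1) i(1), of f] div_eq_iff_interval[OF assms(2)] by auto
  then have "{r\<in>{..<card S}. r div K = l} = {l * K..<l * K + K}"
    using div_eq_iff_interval[OF assms(2)] by auto
  then show ?thesis by (simp add: card_rank_group[OF assms(1)])
qed

lemma card_le_card_rank_group_0:
  assumes "finite S" "0 < K" "U \<subseteq> S" "card U \<le> K"
  shows "card U \<le> card (rank_group f S K 0)"
proof -
  have "{r\<in>{..<card S}. r div K = 0} = {..<min (card S) K}"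
    using div_eq_iff_interval[OF assms(2)] by auto
  moreover have "card U \<le> card S"
    using assms by (simp add: card_mono)
  ultimately show ?thesis
    using assms(4) by (simp add: card_rank_group[OF assms(1)])
qed

lemma rank_group_antimono:
  assumes "finite S" "0 < K" "i \<in> rank_group f S K l" "j \<in> rank_group f S K l'" "l' < l"
  shows "f i \<le> f j"
proof -
  have "value_rank f S j < value_rank f S i"
    using assms(3-5) div_le_mono[of "value_rank f S i" "value_rank f S j" K]
    by (fastforce simp: rank_group_def)
  then show ?thesis
    using rank_less_imp_le[OF assms(1)] assms(3,4) by (auto simp: rank_group_def)
qed

lemma rank_group_subset: "rank_group f S K l \<subseteq> S"
  by (auto simp: rank_group_def)

lemma rank_group_less:
  assumes "finite S" "card S \<le> n" "i \<in> S"
  shows "value_rank f S i div K < n"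
  using rank_less_card[OF assms(1,3), of f] assms(2) div_le_dividend[of "value_rank f S i" K]
  by linarith

lemma sum_rank_groups:
  assumes "finite S" "card S \<le> n"
  shows "sum g S = (\<Sum>l<n. sum g (rank_group f S K l))"
proof -
  have "(\<lambda>i. value_rank f S i div K) ` S \<subseteq> {..<n}"
    using rank_group_less[OF assms] by auto
  then show ?thesis
    unfolding rank_group_def by (simp add: sum.group[OF assms(1)])
qed

lemma rank_groups_cover:
  assumes "finite S" "card S \<le> n"
  shows "S = rank_group f S K 0 \<union> (\<Union>l<n. rank_group f S K (Suc l))"
proof
  show "S \<subseteq> rank_group f S K 0 \<union> (\<Union>l<n. rank_group f S K (Suc l))"
  proof
    fix i assume i: "i \<in> S"
    show "i \<in> rank_group f S K 0 \<union> (\<Union>l<n. rank_group f S K (Suc l))"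
    proof (cases "value_rank f S i div K")
      case (Suc l)
      then show ?thesis
        using i rank_group_less[OF assms i, of f K] by (auto simp: rank_group_def)
    qed (use i in \<open>auto simp: rank_group_def\<close>)
  qed
qed (auto simp: rank_group_def)

lemma card_lessThan_Diff_le: "card ({..<n} - T) \<le> n"
  by (simp add: card_Diff_subset_Int)

lemma sum_le_sum_exchange:
  fixes g :: "nat \<Rightarrow> real"
  assumes "finite U" "finite G" "card U \<le> card G"
    and dom: "\<And>u v. u \<in> U - G \<Longrightarrow> v \<in> G - U \<Longrightarrow> g u \<le> g v"
    and nonneg: "\<And>v. 0 \<le> g v"
  shows "sum g U \<le> sum g G"
proof -
  have card: "card (U - G) \<le> card (G - U)"
    using assms(3) card_Int_Diff[OF assms(1), of G] card_Int_Diff[OF assms(2), of U]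
    by (simp only: Int_commute)
  have "sum g (U - G) \<le> sum g (G - U)"
  proof (cases "U - G = {}")
    case True
    then show ?thesis using nonneg by (simp only: sum.empty sum_nonneg)
  next
    case False
    define c where "c = Max (g ` (U - G))"
    have c: "c \<in> g ` (U - G)"
      using False assms(1) by (simp add: c_def)
    have "sum g (U - G) \<le> card (U - G) * c"
      using assms(1) by (intro sum_bounded_above) (simp add: c_def)
    also have "\<dots> \<le> card (G - U) * c"
      using c card nonneg by (intro mult_right_mono) auto
    also have "\<dots> \<le> sum g (G - U)"
      using c dom by (intro sum_bounded_below) auto
    finally show ?thesis .
  qed
  then show ?thesis
    using sum.Int_Diff[OF assms(1), of g G] sum.Int_Diff[OF assms(2), of g U]
    by (simp only: Int_commute)
qed

lemma sum_le_sum_rank_group_0: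
  assumes "finite S" "0 < K" "U \<subseteq> S" "card U \<le> K" "\<And>i. 0 \<le> f i"
  shows "(\<Sum>i\<in>U. (f i)\<^sup>2) \<le> (\<Sum>i\<in>rank_group f S K 0. (f i)\<^sup>2)"
proof (rule sum_le_sum_exchange)
  show "finite U"
    using assms(3,1) by (rule finite_subset)
  show "finite (rank_group f S K 0)"
    using rank_group_subset assms(1) by (rule finite_subset)
  show "card U \<le> card (rank_group f S K 0)"
    by (rule card_le_card_rank_group_0[OF assms(1-4)])
  fix u v assume u: "u \<in> U - rank_group f S K 0" and v: "v \<in> rank_group f S K 0 - U"
  then have "u \<in> rank_group f S K (value_rank f S u div K)" "0 < value_rank f S u div K"
    using assms(3) by (auto simp: rank_group_def)
  then have "f u \<le> f v"
    using v rank_group_antimono[OF assms(1,2)] by blast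
  then show "(f u)\<^sup>2 \<le> (f v)\<^sup>2"
    using assms(5) by (intro power_mono) auto
qed simp

text \<open>Group \<open>l\<close> is full when group \<open>l + 1\<close> is not empty, so every entry of group \<open>l + 1\<close>
  lies below the \<open>p\<close>-mean of group \<open>l\<close>.\<close>

lemma rank_group_Suc_bound:
  assumes "finite S" "0 < K" "0 < p" "\<And>i. 0 \<le> f i"
  shows "(\<Sum>i\<in>rank_group f S K (Suc l). (f i)\<^sup>2) powr (p / 2)
    \<le> real K powr (p / 2 - 1) * (\<Sum>i\<in>rank_group f S K l. f i powr p)"
proof (cases "rank_group f S K (Suc l) = {}")
  case True
  then show ?thesis by (simp add: sum_nonneg)
next
  case False
  define G where "G = rank_group f S K l"
  define G' where "G' = rank_group f S K (Suc l)"
  define \<mu> where "\<mu> = (\<Sum>i\<in>G. f i powr p) / K"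
  have card_G: "card G = K"
    using card_rank_group_full[OF assms(1,2) False] by (simp add: G_def)
  have "(f i)\<^sup>2 \<le> \<mu> powr (2 / p)" if "i \<in> G'" for i
  proof -
    have "f i \<le> f j" if "j \<in> G" for j
      using \<open>i \<in> G'\<close> that unfolding G_def G'_def
      by (rule rank_group_antimono[OF assms(1,2) _ _ lessI])
    then have "(\<Sum>j\<in>G. f i powr p) \<le> (\<Sum>j\<in>G. f j powr p)"
      using assms(3,4) by (intro sum_mono powr_mono2) auto
    then have "real K * f i powr p \<le> (\<Sum>j\<in>G. f j powr p)"
      using card_G by simp
    then have "f i powr p \<le> \<mu>"
      using assms(2) by (simp add: \<mu>_def field_simps)
    then have "(f i powr p) powr (2 / p) \<le> \<mu> powr (2 / p)"
      using assms(3) by (intro powr_mono2) auto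
    moreover have "(f i powr p) powr (2 / p) = (f i)\<^sup>2"
      using assms(3) assms(4)[of i] by (cases "f i = 0") (simp_all add: powr_powr flip: powr_numeral)
    ultimately show ?thesis by simp
  qed
  then have "(\<Sum>i\<in>G'. (f i)\<^sup>2) \<le> real (card G') * \<mu> powr (2 / p)"
    using sum_bounded_above[of G' "\<lambda>i. (f i)\<^sup>2" "\<mu> powr (2 / p)"] by simp
  also have "\<dots> \<le> real K * \<mu> powr (2 / p)"
    using card_rank_group_le[OF assms(1,2), of f "Suc l"] by (simp add: G'_def mult_right_mono)
  finally have "(\<Sum>i\<in>G'. (f i)\<^sup>2) \<le> real K * \<mu> powr (2 / p)" .
  then have "(\<Sum>i\<in>G'. (f i)\<^sup>2) powr (p / 2) \<le> (real K * \<mu> powr (2 / p)) powr (p / 2)"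
    using assms(3) by (intro powr_mono2) (auto intro: sum_nonneg)
  also have "\<dots> = real K powr (p / 2) * \<mu>"
    using assms(3) by (simp add: powr_mult powr_powr \<mu>_def sum_nonneg)
  also have "\<dots> = real K powr (p / 2 - 1) * (\<Sum>i\<in>G. f i powr p)"
    using assms(2) by (simp add: \<mu>_def powr_diff)
  finally show ?thesis by (simp add: G_def G'_def)
qed

lemma rank_groups_tail_bound:
  assumes "finite S" "card S \<le> n" "0 < K" "0 < p" "\<And>i. 0 \<le> f i"
  shows "(\<Sum>l<n. (\<Sum>i\<in>rank_group f S K (Suc l). (f i)\<^sup>2) powr (p / 2))
    \<le> real K powr (p / 2 - 1) * (\<Sum>i\<in>S. f i powr p)"
proof -
  have "(\<Sum>l<n. (\<Sum>i\<in>rank_group f S K (Suc l). (f i)\<^sup>2) powr (p / 2))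
      \<le> (\<Sum>l<n. real K powr (p / 2 - 1) * (\<Sum>i\<in>rank_group f S K l. f i powr p))"
    by (intro sum_mono rank_group_Suc_bound[OF assms(1,3-5)])
  then show ?thesis
    by (simp add: sum_rank_groups[OF assms(1,2), of _ f K] sum_distrib_left)
qed

section \<open>Block vectors\<close>

lemma sum_blocks:
  fixes F :: "nat \<Rightarrow> 'a::comm_monoid_add"
  shows "(\<Sum>l<n * d. F l) = (\<Sum>i<n. \<Sum>j<d. F (i * d + j))"
proof -
  have "sum F {i * d..<i * d + d} = (\<Sum>j<d. F (i * d + j))" for i
    using sum.shift_bounds_nat_ivl[of F 0 "i * d" d]
    by (simp add: add.commute atLeast0LessThan)
  then show ?thesis
    using sum.nat_group[of F d n] by (simp add: mult.commute)
qed

lemma block_norm_nonneg: "0 \<le> block_norm d z i"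
  by (simp add: block_norm_def sum_nonneg)

lemma norm2_nonneg: "0 \<le> norm2 m v"
  by (simp add: norm2_def sum_nonneg)

lemma norm2_blocks: "norm2 (n * d) z = sqrt (\<Sum>i<n. (block_norm d z i)\<^sup>2)"
  by (simp add: norm2_def block_norm_def sum_blocks sum_nonneg)

lemma block_norm_add_le: "block_norm d (\<lambda>j. f j + g j) i \<le> block_norm d f i + block_norm d g i"
  unfolding block_norm_def using L2_set_triangle_ineq[of "\<lambda>j. f (i * d + j)" _ "{..<d}"]
  by (simp add: L2_set_def)

lemma block_norm_minus: "block_norm d (\<lambda>j. - f j) i = block_norm d f i"
  by (simp add: block_norm_def)

lemma block_norm_diff_le: "block_norm d (\<lambda>j. f j - g j) i \<le> block_norm d f i + block_norm d g i"
  using block_norm_add_le[of d f "\<lambda>j. - g j" i] by (simp add: block_norm_minus)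

lemma block_norm_eq_0_iff: "block_norm d z i = 0 \<longleftrightarrow> (\<forall>j<d. z (i * d + j) = 0)"
  by (auto simp: block_norm_def sum_nonneg_eq_0_iff)

lemma block_norm_restrict_blocks:
  "0 < d \<Longrightarrow> block_norm d (restrict_blocks d U z) i = (if i \<in> U then block_norm d z i else 0)"
  by (simp add: block_norm_def restrict_blocks_def)

lemma norm2_add_le: "norm2 m (\<lambda>i. f i + g i) \<le> norm2 m f + norm2 m g"
  unfolding norm2_def using L2_set_triangle_ineq[of f _ "{..<m}"] by (simp add: L2_set_def)

lemma norm2_diff_le: "norm2 m (\<lambda>i. f i - g i) \<le> norm2 m f + norm2 m g"
  using norm2_add_le[of m f "\<lambda>i. - g i"] by (simp add: norm2_def)

lemma sum_if_mem:
  fixes n :: nat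
  assumes "U \<subseteq> {..<n}"
  shows "(\<Sum>i<n. if i \<in> U then f i else 0) = sum f U"
proof -
  have "(\<Sum>i<n. if i \<in> U then f i else 0) = (\<Sum>i\<in>U. if i \<in> U then f i else 0)"
    using assms by (intro sum.mono_neutral_right) auto
  then show ?thesis by simp
qed

lemma norm2_restrict_blocks:
  assumes "0 < d" "U \<subseteq> {..<n}"
  shows "norm2 (n * d) (restrict_blocks d U z) = sqrt (\<Sum>i\<in>U. (block_norm d z i)\<^sup>2)"
proof -
  have "(\<Sum>i<n. (block_norm d (restrict_blocks d U z) i)\<^sup>2)
      = (\<Sum>i<n. if i \<in> U then (block_norm d z i)\<^sup>2 else 0)"
    using assms(1) by (intro sum.cong) (auto simp: block_norm_restrict_blocks)
  then show ?thesis
    by (simp add: norm2_blocks sum_if_mem[OF assms(2)])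
qed

lemma norm2_restrict_blocks_powr:
  assumes "0 < d" "U \<subseteq> {..<n}"
  shows "norm2 (n * d) (restrict_blocks d U h) powr p = (\<Sum>i\<in>U. (block_norm d h i)\<^sup>2) powr (p / 2)"
  using assms by (simp add: norm2_restrict_blocks sqrt_powr sum_nonneg)

lemma block_sparse_restrict_blocks:
  assumes "0 < d" "U \<subseteq> {..<n}" "card U \<le> s"
  shows "block_sparse n d s (restrict_blocks d U z)"
proof -
  have "block_support n d (restrict_blocks d U z) \<subseteq> U"
    using assms(1) by (auto simp: block_support_def block_norm_restrict_blocks)
  then show ?thesis
    unfolding block_sparse_def using assms(2,3) finite_subset card_mono
    by (metis finite_lessThan order.trans)
qed

lemma mixed_norm_powr: "0 < p \<Longrightarrow> mixed_norm n d p z powr p = (\<Sum>i<n. block_norm d z i powr p)"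
  by (simp add: mixed_norm_def powr_powr sum_nonneg)

lemma restrict_blocks_Un:
  "A \<inter> B = {} \<Longrightarrow> restrict_blocks d (A \<union> B) h j = restrict_blocks d A h j + restrict_blocks d B h j"
  by (auto simp: restrict_blocks_def)

lemma restrict_blocks_UNION:
  assumes "finite J" "disjoint_family_on U J"
  shows "restrict_blocks d (\<Union>g\<in>J. U g) z j = (\<Sum>g\<in>J. restrict_blocks d (U g) z j)"
proof (cases "\<exists>g\<in>J. j div d \<in> U g")
  case True
  then obtain g where g: "g \<in> J" "j div d \<in> U g" by blast
  have "(\<Sum>g'\<in>J. restrict_blocks d (U g') z j) = (\<Sum>g'\<in>J. if g' = g then z j else 0)"
    using assms(2) g by (intro sum.cong) (auto simp: restrict_blocks_def disjoint_family_on_def)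
  then show ?thesis using g assms(1) by (auto simp: restrict_blocks_def)
qed (auto simp: restrict_blocks_def)

lemma restrict_blocks_head_tail:
  fixes h f :: "nat \<Rightarrow> real" and T0 :: "nat set" and n d K :: nat
  defines "G \<equiv> rank_group f ({..<n} - T0) K"
  assumes "j < n * d"
  shows "h j = restrict_blocks d (T0 \<union> G 0) h j + (\<Sum>l<n. restrict_blocks d (G (Suc l)) h j)"
proof -
  have "j div d < n"
    using assms(2) by (simp add: less_mult_imp_div_less)
  then have "h j = restrict_blocks d ((T0 \<union> G 0) \<union> (\<Union>l<n. G (Suc l))) h j"
    using rank_groups_cover[OF _ card_lessThan_Diff_le, of n T0 f K]
    by (auto simp: restrict_blocks_def G_def)
  also have "\<dots> = restrict_blocks d (T0 \<union> G 0) h j + restrict_blocks d (\<Union>l<n. G (Suc l)) h j"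
    by (rule restrict_blocks_Un) (auto simp: G_def rank_group_def)
  also have "restrict_blocks d (\<Union>l<n. G (Suc l)) h j = (\<Sum>l<n. restrict_blocks d (G (Suc l)) h j)"
    by (rule restrict_blocks_UNION) (auto simp: G_def disjoint_family_on_def rank_group_def)
  finally show ?thesis .
qed

lemma norm2_powr_le_head_tail:
  fixes h :: "nat \<Rightarrow> real" and T0 :: "nat set" and n d K :: nat
  defines "b \<equiv> block_norm d h" and "G \<equiv> rank_group (block_norm d h) ({..<n} - T0) K"
  assumes "0 < p" "p \<le> 1" "T0 \<subseteq> {..<n}"
  shows "norm2 (n * d) h powr p \<le> (\<Sum>i\<in>T0 \<union> G 0. (b i)\<^sup>2) powr (p / 2)
    + (\<Sum>l<n. (\<Sum>i\<in>G (Suc l). (b i)\<^sup>2) powr (p / 2))"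
proof -
  define Q where "Q U = (\<Sum>i\<in>U. (b i)\<^sup>2)" for U
  have Q_nonneg: "0 \<le> Q U" for U
    by (simp add: Q_def sum_nonneg)
  have "Q {..<n} = Q T0 + Q ({..<n} - T0)"
    using assms(5) by (simp add: Q_def sum.subset_diff)
  also have "Q ({..<n} - T0) = (\<Sum>l<Suc n. Q (G l))"
    unfolding Q_def G_def using card_lessThan_Diff_le[of n T0] by (intro sum_rank_groups) auto
  also have "\<dots> = Q (G 0) + (\<Sum>l<n. Q (G (Suc l)))"
    by (rule sum.lessThan_Suc_shift)
  also have "Q T0 + (Q (G 0) + (\<Sum>l<n. Q (G (Suc l)))) = Q (T0 \<union> G 0) + (\<Sum>l<n. Q (G (Suc l)))"
  proof -
    have "finite T0" "finite (G 0)" "T0 \<inter> G 0 = {}"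
      using assms(5) finite_subset rank_group_subset[of _ "{..<n} - T0"]
      by (auto simp: G_def rank_group_def)
    then show ?thesis by (simp add: Q_def sum.union_disjoint)
  qed
  finally have "norm2 (n * d) h powr p = (Q (T0 \<union> G 0) + (\<Sum>l<n. Q (G (Suc l)))) powr (p / 2)"
    by (simp add: norm2_blocks sqrt_powr Q_def b_def sum_nonneg)
  also have "\<dots> \<le> Q (T0 \<union> G 0) powr (p / 2) + (\<Sum>l<n. Q (G (Suc l))) powr (p / 2)"
    using assms(3,4) Q_nonneg by (intro powr_add_le_add_powr) (auto intro: sum_nonneg)
  also have "(\<Sum>l<n. Q (G (Suc l))) powr (p / 2) \<le> (\<Sum>l<n. Q (G (Suc l)) powr (p / 2))"
    using assms(3,4) Q_nonneg by (intro powr_sum_le_sum_powr) auto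
  finally show ?thesis by (simp add: Q_def)
qed

section \<open>The \<open>p\<close>-th power norm and the block \<open>p\<close>-RIP\<close>

lemma lp_pow_nonneg: "0 \<le> lp_pow m p v"
  by (simp add: lp_pow_def sum_nonneg)

lemma lp_pow_minus: "lp_pow m p (\<lambda>i. - v i) = lp_pow m p v"
  by (simp add: lp_pow_def)

lemma lp_pow_add_le:
  assumes "0 < p" "p \<le> 1"
  shows "lp_pow m p (\<lambda>i. u i + v i) \<le> lp_pow m p u + lp_pow m p v"
  unfolding lp_pow_def sum.distrib[symmetric]
proof (rule sum_mono)
  fix i
  have "\<bar>u i + v i\<bar> powr p \<le> (\<bar>u i\<bar> + \<bar>v i\<bar>) powr p"
    using assms by (intro powr_mono2) auto
  also have "\<dots> \<le> \<bar>u i\<bar> powr p + \<bar>v i\<bar> powr p"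
    using assms by (intro powr_add_le_add_powr) auto
  finally show "\<bar>u i + v i\<bar> powr p \<le> \<bar>u i\<bar> powr p + \<bar>v i\<bar> powr p" .
qed

lemma lp_pow_sum_le:
  assumes "0 < p" "p \<le> 1" "finite J"
  shows "lp_pow m p (\<lambda>i. \<Sum>g\<in>J. v g i) \<le> (\<Sum>g\<in>J. lp_pow m p (v g))"
  using assms(3)
proof (induction J rule: finite_induct)
  case (insert g J)
  then show ?case
    using lp_pow_add_le[OF assms(1,2), of m "v g" "\<lambda>i. \<Sum>g\<in>J. v g i"] by simp
qed (simp add: lp_pow_def)

lemma lp_pow_le_norm2:
  assumes "0 < p" "p \<le> 1"
  shows "lp_pow m p v \<le> real m powr (1 - p / 2) * norm2 m v powr p"
proof -
  have "lp_pow m p v = (\<Sum>i<m. ((v i)\<^sup>2) powr (p / 2))"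
    unfolding lp_pow_def using sq_powr_half[of "\<bar>v _\<bar>" p] by simp
  also have "\<dots> \<le> real m powr (1 - p / 2) * (\<Sum>i<m. (v i)\<^sup>2) powr (p / 2)"
    using sum_powr_le_card_powr[of "p / 2" "{..<m}"] assms by simp
  also have "(\<Sum>i<m. (v i)\<^sup>2) powr (p / 2) = norm2 m v powr p"
    by (simp add: norm2_def sqrt_powr sum_nonneg)
  finally show ?thesis .
qed

lemma mat_vec_diff: "mat_vec N A (\<lambda>j. f j - g j) = (\<lambda>i. mat_vec N A f i - mat_vec N A g i)"
  by (simp add: fun_eq_iff mat_vec_def right_diff_distrib sum_subtractf)

lemma lp_pow_mat_vec_decompose:
  assumes "0 < p" "p \<le> 1" "finite J" "\<And>j. j < N \<Longrightarrow> h j = u j + (\<Sum>g\<in>J. v g j)"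
  shows "lp_pow m p (mat_vec N A u)
    \<le> lp_pow m p (mat_vec N A h) + (\<Sum>g\<in>J. lp_pow m p (mat_vec N A (v g)))"
proof -
  have "mat_vec N A u = (\<lambda>i. mat_vec N A h i + (\<Sum>g\<in>J. - mat_vec N A (v g) i))"
  proof
    fix i
    have "mat_vec N A u i = (\<Sum>j<N. A i j * h j - (\<Sum>g\<in>J. A i j * v g j))"
      unfolding mat_vec_def using assms(4)
      by (intro sum.cong) (simp_all add: algebra_simps sum_distrib_left)
    then show "mat_vec N A u i = mat_vec N A h i + (\<Sum>g\<in>J. - mat_vec N A (v g) i)"
      by (simp add: mat_vec_def sum_subtractf sum.swap[of _ J] sum_negf)
  qed
  then have "lp_pow m p (mat_vec N A u)
      \<le> lp_pow m p (mat_vec N A h) + lp_pow m p (\<lambda>i. \<Sum>g\<in>J. - mat_vec N A (v g) i)"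
    using lp_pow_add_le[OF assms(1,2)] by presburger
  also have "\<dots> \<le> lp_pow m p (mat_vec N A h) + (\<Sum>g\<in>J. lp_pow m p (mat_vec N A (v g)))"
    using lp_pow_sum_le[OF assms(1-3), of m "\<lambda>g i. - mat_vec N A (v g) i"]
    by (simp add: lp_pow_minus)
  finally show ?thesis .
qed

lemma lp_pow_residual_le:
  assumes "0 < p" "p \<le> 1" "norm2 m e \<le> \<epsilon>"
    and "norm2 m (\<lambda>i. mat_vec N A x i + e i - mat_vec N A xs i) \<le> \<epsilon>"
  shows "lp_pow m p (mat_vec N A (\<lambda>j. xs j - x j)) \<le> real m powr (1 - p / 2) * 2 powr p * \<epsilon> powr p"
proof -
  define r where "r i = mat_vec N A x i + e i - mat_vec N A xs i" for i
  have "norm2 m (mat_vec N A (\<lambda>j. xs j - x j)) = norm2 m (\<lambda>i. e i - r i)"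
    by (simp add: mat_vec_diff r_def)
  moreover have "norm2 m r \<le> \<epsilon>"
    unfolding r_def by (rule assms(4))
  ultimately have "norm2 m (mat_vec N A (\<lambda>j. xs j - x j)) \<le> 2 * \<epsilon>"
    using norm2_diff_le[of m e r] assms(3) by linarith
  then have "lp_pow m p (mat_vec N A (\<lambda>j. xs j - x j)) \<le> real m powr (1 - p / 2) * (2 * \<epsilon>) powr p"
    using lp_pow_le_norm2[OF assms(1,2), of m "mat_vec N A (\<lambda>j. xs j - x j)"] assms(1)
    by (elim order.trans) (intro mult_left_mono powr_mono2, auto simp: norm2_nonneg)
  moreover have "(2 * \<epsilon>) powr p = 2 powr p * \<epsilon> powr p"
    using norm2_nonneg[of m e] assms(3) by (simp add: powr_mult)
  ultimately show ?thesis
    by (simp add: mult.assoc)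
qed

lemma lp_pow_mat_vec_le:
  assumes "0 < p"
  shows "lp_pow m p (mat_vec N A z)
    \<le> real m * (\<Sum>i<m. \<Sum>j<N. \<bar>A i j\<bar>) powr p * norm2 N z powr p"
proof -
  define M where "M = (\<Sum>i<m. \<Sum>j<N. \<bar>A i j\<bar>)"
  have entry: "\<bar>z j\<bar> \<le> norm2 N z" if "j < N" for j
    using that member_le_L2_set[of "{..<N}" j "\<lambda>j. \<bar>z j\<bar>"] by (simp add: norm2_def L2_set_def)
  have row: "\<bar>mat_vec N A z i\<bar> \<le> M * norm2 N z" if "i < m" for i
  proof -
    have "\<bar>mat_vec N A z i\<bar> \<le> (\<Sum>j<N. \<bar>A i j\<bar> * \<bar>z j\<bar>)"
      unfolding mat_vec_def by (rule order.trans[OF sum_abs]) (simp add: abs_mult)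
    also have "\<dots> \<le> (\<Sum>j<N. \<bar>A i j\<bar>) * norm2 N z"
      unfolding sum_distrib_right using entry by (intro sum_mono mult_left_mono) auto
    also have "\<dots> \<le> M * norm2 N z"
      unfolding M_def using that
      by (intro mult_right_mono norm2_nonneg member_le_sum) (auto intro: sum_nonneg)
    finally show ?thesis .
  qed
  have "lp_pow m p (mat_vec N A z) \<le> (\<Sum>i<m. (M * norm2 N z) powr p)"
    unfolding lp_pow_def using row assms by (intro sum_mono powr_mono2) auto
  also have "\<dots> = real m * M powr p * norm2 N z powr p"
    by (simp add: M_def powr_mult norm2_nonneg sum_nonneg)
  finally show ?thesis by (simp add: M_def)
qed

text \<open>So \<open>block_p_RIC\<close> is an infimum over a nonempty set, not the junk value \<open>Inf {}\<close>.\<close>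

lemma block_p_RIC_admissible_exists:
  assumes "0 < p"
  shows "\<exists>\<delta>>0. \<forall>z. block_sparse n d s z \<longrightarrow>
    (1 - \<delta>) * norm2 (n * d) z powr p \<le> lp_pow m p (mat_vec (n * d) A z) \<and>
    lp_pow m p (mat_vec (n * d) A z) \<le> (1 + \<delta>) * norm2 (n * d) z powr p"
proof (intro exI conjI allI impI)
  define C where "C = real m * (\<Sum>i<m. \<Sum>j<n * d. \<bar>A i j\<bar>) powr p"
  show "0 < C + 1"
    by (simp add: C_def add_nonneg_pos)
  fix z
  have "(1 - (C + 1)) * norm2 (n * d) z powr p \<le> 0"
    by (simp add: C_def mult_nonpos_nonneg)
  then show "(1 - (C + 1)) * norm2 (n * d) z powr p \<le> lp_pow m p (mat_vec (n * d) A z)"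
    using lp_pow_nonneg order_trans by blast
  show "lp_pow m p (mat_vec (n * d) A z) \<le> (1 + (C + 1)) * norm2 (n * d) z powr p"
    using lp_pow_mat_vec_le[OF assms, of m "n * d" A z]
    by (simp add: C_def algebra_simps add_increasing)
qed

lemma block_p_RIC_nonneg:
  assumes "0 < p"
  shows "0 \<le> block_p_RIC m n d p A s"
  unfolding block_p_RIC_def using block_p_RIC_admissible_exists[OF assms]
  by (intro cInf_greatest) auto

lemma block_p_RIC_bounds:
  assumes "0 < p" "block_sparse n d s z"
  shows "(1 - block_p_RIC m n d p A s) * norm2 (n * d) z powr p \<le> lp_pow m p (mat_vec (n * d) A z)"
    and "lp_pow m p (mat_vec (n * d) A z) \<le> (1 + block_p_RIC m n d p A s) * norm2 (n * d) z powr p"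
proof -
  define X where "X = norm2 (n * d) z powr p"
  define Y where "Y = lp_pow m p (mat_vec (n * d) A z)"
  define D where "D = {\<delta>. \<delta> > 0 \<and> (\<forall>z. block_sparse n d s z \<longrightarrow>
      (1 - \<delta>) * norm2 (n * d) z powr p \<le> lp_pow m p (mat_vec (n * d) A z) \<and>
      lp_pow m p (mat_vec (n * d) A z) \<le> (1 + \<delta>) * norm2 (n * d) z powr p)}"
  have D: "D \<noteq> {}"
    using block_p_RIC_admissible_exists[OF assms(1)] by (auto simp: D_def)
  have close: "\<bar>Y - X\<bar> \<le> \<delta> * X" if "\<delta> \<in> D" for \<delta>
    using that assms(2) by (auto simp: D_def X_def Y_def algebra_simps)
  have "\<bar>Y - X\<bar> \<le> Inf D * X"
  proof (cases "X = 0")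
    case True
    then show ?thesis using close D by auto
  next
    case False
    then have X: "0 < X" by (simp add: X_def)
    have "\<bar>Y - X\<bar> / X \<le> Inf D"
      using D close X by (intro cInf_greatest) (auto simp: divide_le_eq)
    then show ?thesis using X by (simp add: divide_le_eq)
  qed
  then have "(1 - Inf D) * X \<le> Y \<and> Y \<le> (1 + Inf D) * X"
    by (simp add: algebra_simps abs_le_iff)
  moreover have "block_p_RIC m n d p A s = Inf D"
    by (simp add: block_p_RIC_def D_def)
  ultimately show "(1 - block_p_RIC m n d p A s) * norm2 (n * d) z powr p \<le> Y"
    and "Y \<le> (1 + block_p_RIC m n d p A s) * norm2 (n * d) z powr p"
    by (simp_all add: X_def)
qed

lemma RIP_head_tail_bound:
  fixes h :: "nat \<Rightarrow> real" and T0 :: "nat set" and n d K :: nat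
  defines "b \<equiv> block_norm d h" and "G \<equiv> rank_group (block_norm d h) ({..<n} - T0) K"
  assumes "0 < p" "p \<le> 1" "0 < d" "0 < K" "T0 \<subseteq> {..<n}" "card T0 + K \<le> s"
  shows "(1 - block_p_RIC m n d p A s) * (\<Sum>i\<in>T0 \<union> G 0. (b i)\<^sup>2) powr (p / 2)
    \<le> lp_pow m p (mat_vec (n * d) A h)
      + (1 + block_p_RIC m n d p A K) * (\<Sum>l<n. (\<Sum>i\<in>G (Suc l). (b i)\<^sup>2) powr (p / 2))"
proof -
  have G_sub: "G l \<subseteq> {..<n}" for l
    using rank_group_subset[of "block_norm d h" "{..<n} - T0" K l] by (auto simp: G_def)
  have card_G: "card (G l) \<le> K" for l
    using card_rank_group_le[OF _ assms(6)] by (simp add: G_def)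
  have "card (T0 \<union> G 0) \<le> s"
    using card_Un_le[of T0 "G 0"] card_G[of 0] assms(8) by linarith
  then have "(1 - block_p_RIC m n d p A s) * (\<Sum>i\<in>T0 \<union> G 0. (b i)\<^sup>2) powr (p / 2)
      \<le> lp_pow m p (mat_vec (n * d) A (restrict_blocks d (T0 \<union> G 0) h))"
    using block_p_RIC_bounds(1)[OF assms(3) block_sparse_restrict_blocks[OF assms(5)]]
      assms(7) G_sub by (simp add: norm2_restrict_blocks_powr[OF assms(5)] b_def)
  also have "\<dots> \<le> lp_pow m p (mat_vec (n * d) A h)
      + (\<Sum>l<n. lp_pow m p (mat_vec (n * d) A (restrict_blocks d (G (Suc l)) h)))"
    using assms(3,4) restrict_blocks_head_tail[where f = "block_norm d h" and K = K and h = h]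
    by (intro lp_pow_mat_vec_decompose) (auto simp: G_def)
  also have "(\<Sum>l<n. lp_pow m p (mat_vec (n * d) A (restrict_blocks d (G (Suc l)) h)))
      \<le> (\<Sum>l<n. (1 + block_p_RIC m n d p A K) * (\<Sum>i\<in>G (Suc l). (b i)\<^sup>2) powr (p / 2))"
    using block_p_RIC_bounds(2)[OF assms(3) block_sparse_restrict_blocks[OF assms(5) G_sub card_G]]
    by (intro sum_mono) (simp add: norm2_restrict_blocks_powr[OF assms(5) G_sub] b_def)
  finally show ?thesis
    by (simp add: sum_distrib_left)
qed

section \<open>The cone constraint\<close>

text \<open>The inequality holds pointwise on each of the four regions cut out by \<open>T0\<close> and \<open>Tt\<close>;
  summing and using \<open>opt\<close> gives the claim.\<close>

lemma weighted_cone_inequality: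
  fixes b c \<beta> :: "nat \<Rightarrow> real" and n :: nat and T0 Tt :: "nat set"
  defines "S \<equiv> {..<n} - T0"
  assumes "0 \<le> \<omega>" "T0 \<subseteq> {..<n}" "Tt \<subseteq> {..<n}"
    and tri: "\<And>i. \<beta> i \<le> c i + b i" "\<And>i. b i \<le> c i + \<beta> i"
    and opt: "(\<Sum>i<n. (if i \<in> Tt then \<omega> else 1) * c i) \<le> (\<Sum>i<n. (if i \<in> Tt then \<omega> else 1) * \<beta> i)"
  shows "sum b S \<le> \<omega> * sum b T0 + (1 - \<omega>) * sum b (sym_diff T0 Tt)
    + 2 * \<omega> * sum \<beta> S + 2 * (1 - \<omega>) * sum \<beta> (S - Tt)"
proof -
  define w where "w i = (if i \<in> Tt then \<omega> else 1)" for i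
  define ind where "ind U f i = (if i \<in> U then f i else 0)" for U and f :: "nat \<Rightarrow> real" and i
  define L where "L i = ind S b i - \<omega> * ind T0 b i - (1 - \<omega>) * ind (sym_diff T0 Tt) b i
    - 2 * \<omega> * ind S \<beta> i - 2 * (1 - \<omega>) * ind (S - Tt) \<beta> i" for i
  have "L i \<le> w i * c i - w i * \<beta> i" if "i < n" for i
    using that tri[of i] mult_left_mono[OF tri(1)[of i] assms(2)]
      mult_left_mono[OF tri(2)[of i] assms(2)]
    by (auto simp: L_def ind_def w_def S_def algebra_simps)
  then have "(\<Sum>i<n. L i) \<le> 0"
    using sum_mono[of "{..<n}" L "\<lambda>i. w i * c i - w i * \<beta> i"] opt
    by (simp add: w_def sum_subtractf)
  moreover have "sum (ind U f) {..<n} = sum f U" if "U \<subseteq> {..<n}" for U f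
    unfolding ind_def using that by (rule sum_if_mem)
  moreover have "S \<subseteq> {..<n}" "sym_diff T0 Tt \<subseteq> {..<n}" "S - Tt \<subseteq> {..<n}"
    using assms(3,4) by (auto simp: S_def)
  ultimately show ?thesis
    using assms(3) by (simp add: L_def sum_subtractf flip: sum_distrib_left)
qed

lemma recovery_cone_constraint:
  fixes x xk xs :: "nat \<Rightarrow> real" and Tt T0 :: "nat set" and n d :: nat
  defines "b \<equiv> block_norm d (\<lambda>j. xs j - x j)" and "S \<equiv> {..<n} - T0"
  assumes "0 < p" "p \<le> 1" "0 \<le> \<omega>" "0 < d" "Tt \<subseteq> {..<n}" "T0 = block_support n d xk"
    and opt: "weighted_obj n d p \<omega> Tt xs \<le> weighted_obj n d p \<omega> Tt x"
  shows "(\<Sum>i\<in>S. b i powr p) \<le> \<omega> * (\<Sum>i\<in>T0. b i powr p)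
      + (1 - \<omega>) * (\<Sum>i\<in>sym_diff T0 Tt. b i powr p)
      + 2 * (\<omega> * mixed_norm n d p (\<lambda>j. x j - xk j) powr p
        + (1 - \<omega>) * mixed_norm n d p (restrict_blocks d (- Tt \<inter> - T0) x) powr p)"
proof -
  define c where "c = block_norm d xs"
  define \<beta> where "\<beta> = block_norm d x"
  have T0: "T0 \<subseteq> {..<n}"
    by (auto simp: assms(8) block_support_def)
  have "\<beta> i \<le> c i + b i" for i
    using block_norm_diff_le[of d xs "\<lambda>j. xs j - x j" i] by (simp add: \<beta>_def c_def b_def)
  then have tri1: "\<beta> i powr p \<le> c i powr p + b i powr p" for i
    using assms(3,4) by (intro powr_le_add_powr) (auto simp: b_def c_def \<beta>_def block_norm_nonneg)
  have "b i \<le> c i + \<beta> i" for i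
    using block_norm_diff_le[of d xs x i] by (simp add: \<beta>_def c_def b_def)
  then have tri2: "b i powr p \<le> c i powr p + \<beta> i powr p" for i
    using assms(3,4) by (intro powr_le_add_powr) (auto simp: b_def c_def \<beta>_def block_norm_nonneg)
  have cone: "(\<Sum>i\<in>S. b i powr p) \<le> \<omega> * (\<Sum>i\<in>T0. b i powr p)
      + (1 - \<omega>) * (\<Sum>i\<in>sym_diff T0 Tt. b i powr p)
      + 2 * \<omega> * (\<Sum>i\<in>S. \<beta> i powr p) + 2 * (1 - \<omega>) * (\<Sum>i\<in>S - Tt. \<beta> i powr p)"
    unfolding S_def using assms(5,7) T0 tri1 tri2 opt
    by (intro weighted_cone_inequality) (auto simp: weighted_obj_def c_def \<beta>_def)
  have "block_norm d (\<lambda>j. x j - xk j) i = \<beta> i" if "i \<in> S" for i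
  proof -
    have "\<forall>j<d. xk (i * d + j) = 0"
      using that by (simp add: S_def assms(8) block_support_def block_norm_eq_0_iff)
    then show ?thesis by (simp add: \<beta>_def block_norm_def)
  qed
  then have "(\<Sum>i\<in>S. \<beta> i powr p) = (\<Sum>i\<in>S. block_norm d (\<lambda>j. x j - xk j) i powr p)"
    by simp
  also have "\<dots> \<le> (\<Sum>i<n. block_norm d (\<lambda>j. x j - xk j) i powr p)"
    by (intro sum_mono2) (auto simp: S_def)
  finally have approx: "(\<Sum>i\<in>S. \<beta> i powr p) \<le> mixed_norm n d p (\<lambda>j. x j - xk j) powr p"
    using assms(3) by (simp add: mixed_norm_powr)
  have "mixed_norm n d p (restrict_blocks d (- Tt \<inter> - T0) x) powr p
      = (\<Sum>i<n. if i \<in> S - Tt then \<beta> i powr p else 0)"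
    using assms(3,6) by (simp add: mixed_norm_powr block_norm_restrict_blocks \<beta>_def S_def
        if_distrib[of "\<lambda>t. t powr p"] Int_commute cong: if_cong)
  also have "\<dots> = (\<Sum>i\<in>S - Tt. \<beta> i powr p)"
    by (rule sum_if_mem) (auto simp: S_def)
  finally have tail: "(\<Sum>i\<in>S - Tt. \<beta> i powr p) = mixed_norm n d p (restrict_blocks d (- Tt \<inter> - T0) x) powr p" ..
  show ?thesis
    using cone mult_left_mono[OF approx assms(5)] tail by (simp add: algebra_simps)
qed

lemma card_support_bounds:
  fixes T0 Tt :: "nat set" and k a :: nat and \<rho> \<alpha> :: real
  assumes "finite T0" "finite Tt" "0 < k" "card T0 \<le> k" "(1 - \<alpha>) * \<rho> \<le> real a"
    and "real (card Tt) = \<rho> * real k" "real (card (Tt \<inter> T0)) = \<alpha> * \<rho> * real k"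
  shows "card (Tt - T0) \<le> a * k"
    and "real (card (sym_diff T0 Tt)) \<le> (1 + \<rho> - 2 * \<alpha> * \<rho>) * real k"
    and "0 \<le> 1 + \<rho> - 2 * \<alpha> * \<rho>"
proof -
  have diff: "real (card (Tt - T0)) = (1 - \<alpha>) * \<rho> * real k"
    using card_Int_Diff[OF assms(2), of T0] assms(6,7) by (simp add: algebra_simps)
  also have "\<dots> \<le> real a * real k"
    using assms(5) by (intro mult_right_mono) auto
  finally show "card (Tt - T0) \<le> a * k"
    by (simp flip: of_nat_mult)
  have "card (sym_diff T0 Tt) = card (T0 - Tt) + card (Tt - T0)"
    using assms(1,2) by (intro card_Un_disjoint) auto
  moreover have "real (card (T0 - Tt)) = real (card T0) - \<alpha> * \<rho> * real k"
    using card_Int_Diff[OF assms(1), of Tt] assms(7) by (simp add: Int_commute)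
  ultimately show sym: "real (card (sym_diff T0 Tt)) \<le> (1 + \<rho> - 2 * \<alpha> * \<rho>) * real k"
    using diff assms(4) by (simp add: algebra_simps)
  then have "0 \<le> (1 + \<rho> - 2 * \<alpha> * \<rho>) * real k"
    using of_nat_0_le_iff order_trans by blast
  then show "0 \<le> 1 + \<rho> - 2 * \<alpha> * \<rho>"
    using assms(3) by (simp add: zero_le_mult_iff)
qed

lemma cone_head_bound:
  fixes f :: "nat \<Rightarrow> real" and T0 Tt :: "nat set" and n k K :: nat
  defines "S \<equiv> {..<n} - T0" and "G \<equiv> rank_group f ({..<n} - T0) K"
  assumes "0 < p" "p \<le> 2" "0 \<le> \<omega>" "\<omega> \<le> 1" "\<And>i. 0 \<le> f i" "0 < K"
    and "T0 \<subseteq> {..<n}" "card T0 \<le> k" "Tt \<subseteq> {..<n}" "card (Tt - T0) \<le> K"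
    and "0 \<le> E" "real (card (sym_diff T0 Tt)) \<le> E * real k"
    and cone: "(\<Sum>i\<in>S. f i powr p) \<le> \<omega> * (\<Sum>i\<in>T0. f i powr p)
      + (1 - \<omega>) * (\<Sum>i\<in>sym_diff T0 Tt. f i powr p) + r"
  shows "(\<Sum>i\<in>S. f i powr p)
    \<le> (\<omega> + (1 - \<omega>) * E powr (1 - p / 2)) * real k powr (1 - p / 2)
        * (\<Sum>i\<in>T0 \<union> G 0. (f i)\<^sup>2) powr (p / 2) + r"
proof -
  define Q where "Q U = (\<Sum>i\<in>U. (f i)\<^sup>2)" for U
  have fin: "finite T0" "finite Tt"
    using assms(9,11) finite_subset by auto
  have head: "Q T0 + Q (G 0) = Q (T0 \<union> G 0)"
    unfolding Q_def using fin by (intro sum.union_disjoint[symmetric])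
      (auto simp: G_def rank_group_def intro: finite_subset[OF rank_group_subset])
  have Q_mono: "Q U \<le> Q (T0 \<union> G 0)" if "U \<subseteq> T0 \<union> G 0" for U
    unfolding Q_def using that fin by (intro sum_mono2) (auto simp: G_def rank_group_def
        intro: finite_subset[OF rank_group_subset])
  have "Q (Tt - T0) \<le> Q (G 0)"
    unfolding Q_def G_def using assms(7,8,11,12)
    by (intro sum_le_sum_rank_group_0) auto
  moreover have "Q (T0 - Tt) \<le> Q T0"
    unfolding Q_def using fin by (intro sum_mono2) (auto simp: sum_nonneg)
  moreover have "Q (sym_diff T0 Tt) = Q (T0 - Tt) + Q (Tt - T0)"
    unfolding Q_def using fin by (intro sum.union_disjoint) auto
  ultimately have Q_sym: "Q (sym_diff T0 Tt) \<le> Q (T0 \<union> G 0)"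
    using head by linarith
  have Q_nonneg: "0 \<le> Q U" for U
    by (simp add: Q_def sum_nonneg)
  have "(\<Sum>i\<in>T0. f i powr p) \<le> real (card T0) powr (1 - p / 2) * Q T0 powr (p / 2)"
    unfolding Q_def using assms(3,4,7) fin by (intro sum_powr_le_card_sum_sq)
  also have "\<dots> \<le> real k powr (1 - p / 2) * Q (T0 \<union> G 0) powr (p / 2)"
    using assms(3,4,10) Q_mono[of T0] Q_nonneg by (intro mult_mono powr_mono2) auto
  finally have P_T0: "(\<Sum>i\<in>T0. f i powr p) \<le> real k powr (1 - p / 2) * Q (T0 \<union> G 0) powr (p / 2)" .
  have "(\<Sum>i\<in>sym_diff T0 Tt. f i powr p)
      \<le> real (card (sym_diff T0 Tt)) powr (1 - p / 2) * Q (sym_diff T0 Tt) powr (p / 2)"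
    unfolding Q_def using assms(3,4,7) fin by (intro sum_powr_le_card_sum_sq) auto
  also have "\<dots> \<le> (E * real k) powr (1 - p / 2) * Q (T0 \<union> G 0) powr (p / 2)"
    using assms(3,4,14) Q_sym Q_nonneg by (intro mult_mono powr_mono2) auto
  finally have P_sym: "(\<Sum>i\<in>sym_diff T0 Tt. f i powr p)
      \<le> (E * real k) powr (1 - p / 2) * Q (T0 \<union> G 0) powr (p / 2)" .
  have "(E * real k) powr (1 - p / 2) = E powr (1 - p / 2) * real k powr (1 - p / 2)"
    using assms(13) by (simp add: powr_mult)
  then show ?thesis
    using cone mult_left_mono[OF P_T0 assms(5)] mult_left_mono[OF P_sym, of "1 - \<omega>"] assms(6)
    by (simp add: Q_def algebra_simps)
qed

section \<open>The error bound\<close>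

lemma head_tail_error_bound:
  fixes N Z \<Theta> \<eta> s t \<delta>1 \<delta>2 :: real
  assumes "0 \<le> \<delta>1" "0 \<le> t" "0 < 1 - \<delta>2 - (1 + \<delta>1) * t"
    and "N \<le> Z + \<Theta>" "\<Theta> \<le> t * Z + s" "(1 - \<delta>2) * Z \<le> \<eta> + (1 + \<delta>1) * \<Theta>"
  shows "N \<le> (1 + t) * (\<eta> + (1 + \<delta>1) * s) / (1 - \<delta>2 - (1 + \<delta>1) * t) + s"
proof -
  have "(1 - \<delta>2 - (1 + \<delta>1) * t) * Z \<le> \<eta> + (1 + \<delta>1) * s"
    using assms(5,6) mult_left_mono[OF assms(5), of "1 + \<delta>1"] assms(1)
    by (simp add: algebra_simps)
  then have "Z \<le> (\<eta> + (1 + \<delta>1) * s) / (1 - \<delta>2 - (1 + \<delta>1) * t)"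
    using assms(3) by (simp add: field_simps)
  then have "(1 + t) * Z \<le> (1 + t) * ((\<eta> + (1 + \<delta>1) * s) / (1 - \<delta>2 - (1 + \<delta>1) * t))"
    using assms(2) by (intro mult_left_mono) auto
  then show ?thesis
    using assms(4,5) by (simp add: algebra_simps)
qed

lemma RIP_condition_margin:
  fixes \<delta>1 \<delta>2 \<gamma> x p :: real
  assumes "0 \<le> \<delta>1" "0 \<le> \<gamma>" "0 < x"
    and "\<delta>1 + x powr (1 - p / 2) / \<gamma> * \<delta>2 < x powr (1 - p / 2) / \<gamma> - 1"
  shows "0 < 1 - \<delta>2 - (1 + \<delta>1) * (\<gamma> * x powr (p / 2 - 1))"
proof -
  define q where "q = \<gamma> * x powr (p / 2 - 1)"
  have "0 < \<gamma>"
    using assms by (cases "\<gamma> = 0") auto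
  moreover have "x powr (p / 2 - 1) = inverse (x powr (1 - p / 2))"
    using powr_minus[of x "1 - p / 2"] by (simp only: minus_diff_eq)
  ultimately have q: "0 < q" "x powr (1 - p / 2) / \<gamma> = 1 / q"
    using assms(3) by (simp_all add: q_def field_simps)
  have "(\<delta>1 + 1 / q * \<delta>2) * q < (1 / q - 1) * q"
    using assms(4) q by (intro mult_strict_right_mono) auto
  moreover have "(\<delta>1 + 1 / q * \<delta>2) * q = \<delta>1 * q + \<delta>2" "(1 / q - 1) * q = 1 - q"
    using q by (simp_all add: field_simps)
  ultimately show ?thesis
    unfolding q_def[symmetric] by (simp add: algebra_simps)
qed

lemma recovery_error_powr_bound:
  fixes p \<omega> \<rho> \<alpha> \<epsilon> t \<delta>1 \<delta>2 :: real and m n d k a :: nat and A :: "nat \<Rightarrow> nat \<Rightarrow> real"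
    and x e xk xs :: "nat \<Rightarrow> real" and T0 Tt :: "nat set"
  defines "R \<equiv> \<omega> * mixed_norm n d p (\<lambda>j. x j - xk j) powr p
      + (1 - \<omega>) * mixed_norm n d p (restrict_blocks d (- Tt \<inter> - T0) x) powr p"
  assumes p: "0 < p" "p \<le> 1" and \<omega>: "0 \<le> \<omega>" "\<omega> \<le> 1"
    and d: "0 < d" and k: "0 < k" and a: "0 < a" "(1 - \<alpha>) * \<rho> \<le> real a"
    and t: "t = (\<omega> + (1 - \<omega>) * (1 + \<rho> - 2 * \<alpha> * \<rho>) powr (1 - p / 2)) * real a powr (p / 2 - 1)"
    and \<delta>: "\<delta>1 = block_p_RIC m n d p A (a * k)" "\<delta>2 = block_p_RIC m n d p A ((a + 1) * k)"
    and \<kappa>: "0 < 1 - \<delta>2 - (1 + \<delta>1) * t"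
    and noise: "norm2 m e \<le> \<epsilon>" and sparse: "block_sparse n d k xk"
    and supp: "T0 = block_support n d xk" and Tt: "Tt \<subseteq> {..<n}"
    and card: "real (card Tt) = \<rho> * real k" "real (card (Tt \<inter> T0)) = \<alpha> * \<rho> * real k"
    and feasible: "norm2 m (\<lambda>i. mat_vec (n * d) A x i + e i - mat_vec (n * d) A xs i) \<le> \<epsilon>"
    and optimal: "\<And>z. norm2 m (\<lambda>i. mat_vec (n * d) A x i + e i - mat_vec (n * d) A z i) \<le> \<epsilon> \<Longrightarrow>
      weighted_obj n d p \<omega> Tt xs \<le> weighted_obj n d p \<omega> Tt z"
  shows "norm2 (n * d) (\<lambda>j. xs j - x j) powr p
    \<le> (1 + t) * (real m powr (1 - p / 2) * 2 powr p * \<epsilon> powr p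
          + (1 + \<delta>1) * (2 * real (a * k) powr (p / 2 - 1) * R)) / (1 - \<delta>2 - (1 + \<delta>1) * t)
      + 2 * real (a * k) powr (p / 2 - 1) * R"
proof -
  define h where "h = (\<lambda>j. xs j - x j)"
  define b where "b = block_norm d h"
  define K where "K = a * k"
  define G where "G = rank_group b ({..<n} - T0) K"
  define Z where "Z = (\<Sum>i\<in>T0 \<union> G 0. (b i)\<^sup>2) powr (p / 2)"
  define \<Theta> where "\<Theta> = (\<Sum>l<n. (\<Sum>i\<in>G (Suc l). (b i)\<^sup>2) powr (p / 2))"
  define E where "E = 1 + \<rho> - 2 * \<alpha> * \<rho>"
  have K: "0 < K" using a k by (simp add: K_def)
  have T0: "T0 \<subseteq> {..<n}" "card T0 \<le> k"
    using supp sparse by (auto simp: block_support_def block_sparse_def)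
  note cards = card_support_bounds[OF finite_subset[OF T0(1)] finite_subset[OF Tt] k T0(2) a(2)
      card]
  have "weighted_obj n d p \<omega> Tt xs \<le> weighted_obj n d p \<omega> Tt x"
    using optimal[of x] noise by simp
  then have "(\<Sum>i\<in>{..<n} - T0. b i powr p) \<le> \<omega> * (\<Sum>i\<in>T0. b i powr p)
      + (1 - \<omega>) * (\<Sum>i\<in>sym_diff T0 Tt. b i powr p) + 2 * R"
    unfolding b_def h_def R_def using p \<omega>(1) d Tt supp
    by (intro recovery_cone_constraint) auto
  then have head: "(\<Sum>i\<in>{..<n} - T0. b i powr p)
      \<le> (\<omega> + (1 - \<omega>) * E powr (1 - p / 2)) * real k powr (1 - p / 2) * Z + 2 * R"
    unfolding Z_def G_def E_def using p \<omega> K T0 Tt cards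
    by (intro cone_head_bound) (auto simp: b_def block_norm_nonneg K_def)
  have "real K powr (p / 2 - 1) * real k powr (1 - p / 2) = real a powr (p / 2 - 1)"
    using k by (simp add: K_def powr_mult flip: powr_add)
  then have t_split: "t = (\<omega> + (1 - \<omega>) * E powr (1 - p / 2))
      * (real K powr (p / 2 - 1) * real k powr (1 - p / 2))"
    by (simp add: t E_def)
  have tail: "\<Theta> \<le> t * Z + 2 * real K powr (p / 2 - 1) * R"
    using rank_groups_tail_bound[OF _ card_lessThan_Diff_le K p(1), of n T0 b]
      mult_left_mono[OF head, of "real K powr (p / 2 - 1)"]
    by (simp add: t_split \<Theta>_def G_def b_def block_norm_nonneg algebra_simps)
  have "(1 - \<delta>2) * Z \<le> lp_pow m p (mat_vec (n * d) A h) + (1 + \<delta>1) * \<Theta>"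
    using RIP_head_tail_bound[OF p d K T0(1), of "(a + 1) * k" m A h] T0(2)
    by (simp add: Z_def \<Theta>_def b_def G_def \<delta> K_def)
  then have rip: "(1 - \<delta>2) * Z \<le> real m powr (1 - p / 2) * 2 powr p * \<epsilon> powr p + (1 + \<delta>1) * \<Theta>"
    using lp_pow_residual_le[OF p noise feasible] by (simp add: h_def)
  have "norm2 (n * d) h powr p \<le> Z + \<Theta>"
    using norm2_powr_le_head_tail[OF p T0(1), where h = h and K = K]
    by (simp add: Z_def \<Theta>_def b_def G_def)
  moreover have "0 \<le> \<delta>1"
    using block_p_RIC_nonneg[OF p(1)] by (simp add: \<delta>)
  moreover have "0 \<le> t"
    using \<omega> by (simp add: t)
  ultimately show ?thesis
    using head_tail_error_bound[OF _ _ \<kappa> _ tail rip] by (simp add: h_def K_def)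
qed

lemma recovery_error_bound:
  fixes p \<omega> \<rho> \<alpha> \<epsilon> t \<delta>1 \<delta>2 c1 c2 C1 C2 :: real and m n d k a :: nat
    and A :: "nat \<Rightarrow> nat \<Rightarrow> real" and x e xk xs :: "nat \<Rightarrow> real" and T0 Tt :: "nat set"
  assumes p: "0 < p" "p \<le> 1" and \<omega>: "0 \<le> \<omega>" "\<omega> \<le> 1"
    and k: "0 < k" and a: "0 < a" "(1 - \<alpha>) * \<rho> \<le> real a"
    and t: "t = (\<omega> + (1 - \<omega>) * (1 + \<rho> - 2 * \<alpha> * \<rho>) powr (1 - p / 2)) * real a powr (p / 2 - 1)"
    and \<delta>: "\<delta>1 = block_p_RIC m n d p A (a * k)" "\<delta>2 = block_p_RIC m n d p A ((a + 1) * k)"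
    and \<kappa>: "0 < 1 - \<delta>2 - (1 + \<delta>1) * t"
    and c1: "c1 = (1 + t) * (real m powr (1 - p / 2) * 2 powr p) / (1 - \<delta>2 - (1 + \<delta>1) * t)"
    and c2: "c2 = 2 * real (a * k) powr (p / 2 - 1) * ((1 + t) * (1 + \<delta>1) / (1 - \<delta>2 - (1 + \<delta>1) * t) + 1)"
    and C: "C1 = (2 * c2 + 1) powr (1 / p) * real k powr (1 / p - 1 / 2)" "C2 = (2 * c1 + 1) powr (1 / p)"
    and noise: "norm2 m e \<le> \<epsilon>" and sparse: "block_sparse n d k xk"
    and supp: "T0 = block_support n d xk" and Tt: "Tt \<subseteq> {..<n}"
    and card: "real (card Tt) = \<rho> * real k" "real (card (Tt \<inter> T0)) = \<alpha> * \<rho> * real k"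
    and feasible: "norm2 m (\<lambda>i. mat_vec (n * d) A x i + e i - mat_vec (n * d) A xs i) \<le> \<epsilon>"
    and optimal: "\<And>z. norm2 m (\<lambda>i. mat_vec (n * d) A x i + e i - mat_vec (n * d) A z i) \<le> \<epsilon> \<Longrightarrow>
      weighted_obj n d p \<omega> Tt xs \<le> weighted_obj n d p \<omega> Tt z"
  shows "norm2 (n * d) (\<lambda>j. xs j - x j)
    \<le> C1 * (\<omega> * mixed_norm n d p (\<lambda>j. x j - xk j) powr p
          + (1 - \<omega>) * mixed_norm n d p (restrict_blocks d (- Tt \<inter> - T0) x) powr p) powr (1 / p)
        / real k powr (1 / p - 1 / 2)
      + C2 * \<epsilon>"
proof -
  define R where "R = \<omega> * mixed_norm n d p (\<lambda>j. x j - xk j) powr p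
      + (1 - \<omega>) * mixed_norm n d p (restrict_blocks d (- Tt \<inter> - T0) x) powr p"
  have R: "0 \<le> R" and \<epsilon>: "0 \<le> \<epsilon>"
    using \<omega> noise norm2_nonneg[of m e] by (auto simp: R_def)
  have nonneg: "0 \<le> t" "0 \<le> \<delta>1"
    using \<omega> block_p_RIC_nonneg[OF p(1)] by (auto simp: t \<delta>)
  then have c_nonneg: "0 \<le> c1" "0 \<le> c2"
    using \<kappa> by (auto simp: c1 c2)
  have "norm2 (n * d) (\<lambda>j. xs j - x j) powr p \<le> c1 * \<epsilon> powr p + c2 * R"
  proof (cases "d = 0")
    case True
    then show ?thesis using c_nonneg R \<epsilon> by (simp add: norm2_def)
  next
    case False
    have rearrange: "(1 + t) * (M * X + (1 + \<delta>1) * (s * r)) / q + s * r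
        = (1 + t) * M / q * X + s * ((1 + t) * (1 + \<delta>1) / q + 1) * r" if "q \<noteq> 0" for M X s r q
      using that by (simp add: field_simps)
    have \<kappa>_ne: "1 - \<delta>2 - (1 + \<delta>1) * t \<noteq> 0"
      using \<kappa> by simp
    show ?thesis
      using recovery_error_powr_bound[OF p \<omega> _ k a t \<delta> \<kappa> noise sparse supp Tt card feasible
          optimal, folded R_def] False
      unfolding rearrange[OF \<kappa>_ne] c1 c2 by simp
  qed
  then have "norm2 (n * d) (\<lambda>j. xs j - x j)
      \<le> (2 * c2 + 1) powr (1 / p) * R powr (1 / p) + (2 * c1 + 1) powr (1 / p) * \<epsilon>"
    using le_root_bound_of_powr_le[OF p(1) norm2_nonneg c_nonneg \<epsilon> R] by blast
  then show ?thesis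
    using k by (simp add: C R_def)
qed

theorem theorem1:
  fixes p \<omega> \<rho> \<alpha> :: real and m n d k a :: nat and A :: "nat \<Rightarrow> nat \<Rightarrow> real"
  assumes hp: "0 < p" "p \<le> 1"
    and h\<omega>: "0 \<le> \<omega>" "\<omega> \<le> 1"
    and h\<rho>\<alpha>: "0 \<le> \<rho>" "0 \<le> \<alpha>"
    and hk: "1 \<le> k"
    and ha: "real a \<ge> (1 - \<alpha>) * \<rho>" "a > 1"
    and hRIP: "let \<gamma> = \<omega> + (1 - \<omega>) * (1 + \<rho> - 2 * \<alpha> * \<rho>) powr (1 - p/2) in
      block_p_RIC m n d p A (a*k) + real a powr (1 - p/2) / \<gamma> * block_p_RIC m n d p A ((a+1)*k)
        < real a powr (1 - p/2) / \<gamma> - 1"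
  shows "\<exists>C1>0. \<exists>C2>0. \<forall>x e \<epsilon> xk T0 Tt xs.
      norm2 m e \<le> \<epsilon>
      \<and> block_sparse n d k xk
      \<and> (\<forall>g. block_sparse n d k g \<longrightarrow>
            mixed_norm n d 1 (\<lambda>j. x j - xk j) \<le> mixed_norm n d 1 (\<lambda>j. x j - g j))
      \<and> T0 = block_support n d xk
      \<and> Tt \<subseteq> {..<n}
      \<and> real (card Tt) = \<rho> * real k
      \<and> real (card (Tt \<inter> T0)) = \<alpha> * \<rho> * real k
      \<and> norm2 m (\<lambda>i. mat_vec (n*d) A x i + e i - mat_vec (n*d) A xs i) \<le> \<epsilon>
      \<and> (\<forall>z. norm2 m (\<lambda>i. mat_vec (n*d) A x i + e i - mat_vec (n*d) A z i) \<le> \<epsilon> \<longrightarrow>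
            weighted_obj n d p \<omega> Tt xs \<le> weighted_obj n d p \<omega> Tt z)
      \<longrightarrow> norm2 (n*d) (\<lambda>j. xs j - x j)
          \<le> C1 * (\<omega> * mixed_norm n d p (\<lambda>j. x j - xk j) powr p
                  + (1 - \<omega>) * mixed_norm n d p (restrict_blocks d (- Tt \<inter> - T0) x) powr p) powr (1/p)
              / real k powr (1/p - 1/2)
            + C2 * \<epsilon>"
proof -
  define \<gamma> where "\<gamma> = \<omega> + (1 - \<omega>) * (1 + \<rho> - 2 * \<alpha> * \<rho>) powr (1 - p / 2)"
  define \<delta>1 where "\<delta>1 = block_p_RIC m n d p A (a * k)"
  define \<delta>2 where "\<delta>2 = block_p_RIC m n d p A ((a + 1) * k)"
  define t where "t = \<gamma> * real a powr (p / 2 - 1)"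
  have nonneg: "0 \<le> \<gamma>" "0 \<le> \<delta>1"
    using h\<omega> block_p_RIC_nonneg[OF hp(1)] by (auto simp: \<gamma>_def \<delta>1_def)
  have RIP: "\<delta>1 + real a powr (1 - p / 2) / \<gamma> * \<delta>2 < real a powr (1 - p / 2) / \<gamma> - 1"
    using hRIP unfolding Let_def \<gamma>_def[symmetric] \<delta>1_def[symmetric] \<delta>2_def[symmetric] .
  have \<kappa>: "0 < 1 - \<delta>2 - (1 + \<delta>1) * t"
    unfolding t_def by (rule RIP_condition_margin[OF nonneg(2,1) _ RIP]) (use ha(2) in simp)
  define c1 where "c1 = (1 + t) * (real m powr (1 - p / 2) * 2 powr p) / (1 - \<delta>2 - (1 + \<delta>1) * t)"
  define c2 where "c2 = 2 * real (a * k) powr (p / 2 - 1) * ((1 + t) * (1 + \<delta>1) / (1 - \<delta>2 - (1 + \<delta>1) * t) + 1)"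
  define C1 where "C1 = (2 * c2 + 1) powr (1 / p) * real k powr (1 / p - 1 / 2)"
  define C2 where "C2 = (2 * c1 + 1) powr (1 / p)"
  have "0 \<le> c1" "0 \<le> c2"
    using nonneg \<kappa> by (auto simp: c1_def c2_def t_def)
  then have "0 < C1" "0 < C2"
    using hk by (auto simp: C1_def C2_def)
  moreover have "0 < k" "0 < a"
    using hk ha(2) by auto
  note bound = recovery_error_bound[OF hp h\<omega> this ha(1)
      t_def[unfolded \<gamma>_def] \<delta>1_def \<delta>2_def \<kappa> c1_def c2_def C1_def C2_def]
  ultimately show ?thesis
    using bound by blast
qed

end
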